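(* Let $G^0,G^1,G^2$ be finite-dimensional complex vector spaces with $\dim G^1\ge1$. For a subspace $E\subset\mathrm{Hom}(G^0,G^1)$, define $$\phi_E:E\times\mathrm{Hom}(G^1,G^2)\to\mathrm{Hom}(G^0,G^2),\qquad(\alpha,\beta)\mapsto\beta\circ\alpha.$$ Let $p=\left\lfloor\frac{\dim G^1-1}{\dim G^0}\right\rfloor+1$. If $\dim G^0>1$, then for every integer $k$ with $3p\le k\le\dim\mathrm{Hom}(G^0,G^1)$ and every $E$ in a nonempty Zariski open subset of $G(k,\mathrm{Hom}(G^0,G^1))$, we have $\mathrm{Symm}(\phi_E)=\{0\}$.
   Context: For a bilinear map $B:E\times F\to G$, define $$\mathrm{Symm}(B)=\{q\in\mathrm{Hom}(E,F): B(\alpha,q(\alpha'))=B(\alpha',q(\alpha))\ \forall\alpha,\alpha'\in E\}.$$ Thus $\mathrm{Symm}(\phi_E)$ is the set of $q\in\mathrm{Hom}(E,\mathrm{Hom}(G^1,G^2))$ with $q(\alpha')\circ\alpha=q(\alpha)\circ\alpha'$ for all $\alpha,\alpha'\in E$. *)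

theory Defs
  imports "HOL-Analysis.Analysis"
begin

text \<open>Finite-dimensional complex vector spaces G0, G1, G2 are modelled as complex^'a, complex^'b,
  complex^'c for finite index types; Hom(G^i,G^j) is the space of complex matrices
  complex^'i^'j (rows indexed by the codomain), composition is matrix product.\<close>

inductive_set polyfun :: "(('v \<Rightarrow> complex) \<Rightarrow> complex) set" where
  const: "(\<lambda>x. c) \<in> polyfun"
| var: "(\<lambda>x. x v) \<in> polyfun"
| add: "p \<in> polyfun \<Longrightarrow> q \<in> polyfun \<Longrightarrow> (\<lambda>x. p x + q x) \<in> polyfun"
| mult: "p \<in> polyfun \<Longrightarrow> q \<in> polyfun \<Longrightarrow> (\<lambda>x. p x * q x) \<in> polyfun"

definition cscale :: "complex \<Rightarrow> complex^'n^'m \<Rightarrow> complex^'n^'m" where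
  "cscale c A = (\<chi> i j. c * A$i$j)"

definition cspan_mats :: "('k::finite \<Rightarrow> complex^'n^'m) \<Rightarrow> (complex^'n^'m) set" where
  "cspan_mats A = {(\<Sum>i\<in>UNIV. cscale (c i) (A i)) | c. True}"

definition clin_indep_mats :: "('k::finite \<Rightarrow> complex^'n^'m) \<Rightarrow> bool" where
  "clin_indep_mats A \<longleftrightarrow> (\<forall>c. (\<Sum>i\<in>UNIV. cscale (c i) (A i)) = 0 \<longrightarrow> (\<forall>i. c i = 0))"

text \<open>Complex-linear maps defined on the set E (represented extensionally: zero off E).\<close>
definition clinear_on_mats ::
  "(complex^'n^'m) set \<Rightarrow> (complex^'n^'m \<Rightarrow> complex^'p^'q) \<Rightarrow> bool" where
  "clinear_on_mats E q \<longleftrightarrow>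
     (\<forall>x\<in>E. \<forall>y\<in>E. q (x + y) = q x + q y) \<and>
     (\<forall>c. \<forall>x\<in>E. q (cscale c x) = cscale c (q x)) \<and>
     (\<forall>x. x \<notin> E \<longrightarrow> q x = 0)"

text \<open>Symm(phi_E) for phi_E : E x Hom(G1,G2) -> Hom(G0,G2), (alpha,beta) |-> beta o alpha.\<close>
definition Symm_phi ::
  "(complex^'a^'b) set \<Rightarrow> (complex^'a^'b \<Rightarrow> complex^'b^'c) set" where
  "Symm_phi E = {q. clinear_on_mats E q \<and>
                    (\<forall>\<alpha>\<in>E. \<forall>\<alpha>'\<in>E. q \<alpha>' ** \<alpha> = q \<alpha> ** \<alpha>')}"

end

(* Both conclusions say that a matrix whose entries are linear in the entries of the family A is
   injective: for independence the coefficient map c |-> sum_i c_i A_i, for Symm(phi_E) = 0 the map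
   (y_i)_i |-> (y_j A_i - y_i A_j)_(i,j) on families of rows, because for q in Symm(phi_E) and any
   row index g the g-th rows of the q(A_i) lie in its kernel.  Injectivity at a single point x0
   persists where det (B M(x)) does not vanish, B a left inverse of M(x0), and two nonempty
   Zariski open subsets of affine space meet.
   For the second map the point is explicit.  The p blocks P_t embed G^0 into G^1 and together
   cover it; take the 3p matrices P_t, P_t D, P_t S with D diagonal with distinct entries and S a
   fixpoint-free permutation matrix.  Symmetry forces u = y_(P_t) P_t' to satisfy u S D = u D S,
   so u = 0 because SD - DS is invertible; since the blocks cover G^1 this kills every y_i. *)

theory Submission
  imports Defs "HOL-Computational_Algebra.Polynomial" "HOL-Combinatorics.Cycles"
begin

lemma polyfun_uminus: "p \<in> polyfun \<Longrightarrow> (\<lambda>x. - p x) \<in> polyfun"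
  using polyfun.mult[OF polyfun.const[of "-1"]] by simp

lemma polyfun_diff: "p \<in> polyfun \<Longrightarrow> q \<in> polyfun \<Longrightarrow> (\<lambda>x. p x - q x) \<in> polyfun"
  using polyfun.add[OF _ polyfun_uminus[of q]] by simp

lemma polyfun_sum:
  "finite S \<Longrightarrow> (\<And>s. s \<in> S \<Longrightarrow> f s \<in> polyfun) \<Longrightarrow> (\<lambda>x. \<Sum>s\<in>S. f s x) \<in> polyfun"
  by (induction S rule: finite_induct) (auto intro: polyfun.const polyfun.add)

lemma polyfun_prod:
  "finite S \<Longrightarrow> (\<And>s. s \<in> S \<Longrightarrow> f s \<in> polyfun) \<Longrightarrow> (\<lambda>x. \<Prod>s\<in>S. f s x) \<in> polyfun"
  by (induction S rule: finite_induct) (auto intro: polyfun.const polyfun.mult)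

lemma polyfun_det:
  fixes M :: "('v \<Rightarrow> complex) \<Rightarrow> complex^'n^'n"
  assumes "\<And>i j. (\<lambda>x. M x $ i $ j) \<in> polyfun"
  shows "(\<lambda>x. det (M x)) \<in> polyfun"
  unfolding det_def
  by (intro polyfun_sum polyfun.mult[OF polyfun.const] polyfun_prod assms)
    (simp_all add: finite_permutations)

lemma polyfun_matrix_mult:
  fixes M :: "('v \<Rightarrow> complex) \<Rightarrow> complex^'n^'m"
  assumes "\<And>i j. (\<lambda>x. M x $ i $ j) \<in> polyfun"
  shows "(\<lambda>x. (B ** M x) $ i $ j) \<in> polyfun"
proof -
  have "(\<lambda>x. \<Sum>k\<in>UNIV. B $ i $ k * M x $ k $ j) \<in> polyfun"
    by (intro polyfun_sum polyfun.mult[OF polyfun.const] assms) simp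
  then show ?thesis by (simp add: matrix_matrix_mult_def)
qed

lemma polyfun_on_line:
  assumes "P \<in> polyfun"
  shows "\<exists>p. \<forall>t. P (\<lambda>v. x v + t * (y v - x v)) = poly p t"
  using assms
proof induction
  case (const c)
  show ?case by (intro exI[of _ "[:c:]"]) simp
next
  case (var v)
  show ?case by (intro exI[of _ "[:x v, y v - x v:]"]) (simp add: algebra_simps)
next
  case (add p q)
  then obtain a b where "\<forall>t. p (\<lambda>v. x v + t * (y v - x v)) = poly a t"
    "\<forall>t. q (\<lambda>v. x v + t * (y v - x v)) = poly b t" by blast
  then show ?case by (intro exI[of _ "a + b"]) simp
next
  case (mult p q)
  then obtain a b where "\<forall>t. p (\<lambda>v. x v + t * (y v - x v)) = poly a t"
    "\<forall>t. q (\<lambda>v. x v + t * (y v - x v)) = poly b t" by blast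
  then show ?case by (intro exI[of _ "a * b"]) simp
qed

lemma polyfun_common_nonzero:
  assumes "P \<in> polyfun" "Q \<in> polyfun" "P x \<noteq> 0" "Q y \<noteq> 0"
  shows "\<exists>z. P z \<noteq> 0 \<and> Q z \<noteq> 0"
proof -
  obtain p where p: "\<And>t. P (\<lambda>v. x v + t * (y v - x v)) = poly p t"
    using polyfun_on_line[OF assms(1)] by blast
  obtain q where q: "\<And>t. Q (\<lambda>v. x v + t * (y v - x v)) = poly q t"
    using polyfun_on_line[OF assms(2)] by blast
  have "poly p 0 \<noteq> 0" "poly q 1 \<noteq> 0"
    using p[of 0] q[of 1] assms(3,4) by simp_all
  then have "p * q \<noteq> 0" by auto
  then have "finite {t. poly (p * q) t = 0}" by (rule poly_roots_finite)
  then obtain t where "t \<notin> {t. poly (p * q) t = 0}"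
    using ex_new_if_finite[OF infinite_UNIV_char_0] by blast
  then show ?thesis using p q by (intro exI[of _ "\<lambda>v. x v + t * (y v - x v)"]) simp
qed

lemma polyfun_injective_locus:
  fixes M :: "('v \<Rightarrow> complex) \<Rightarrow> complex^'n^'m"
  assumes entries: "\<And>i j. (\<lambda>x. M x $ i $ j) \<in> polyfun"
    and inj0: "\<And>y. M x0 *v y = 0 \<Longrightarrow> y = 0"
  shows "\<exists>P\<in>polyfun. P x0 \<noteq> 0 \<and> (\<forall>x. P x \<noteq> 0 \<longrightarrow> (\<forall>y. M x *v y = 0 \<longrightarrow> y = 0))"
proof -
  obtain B where B: "B ** M x0 = mat 1"
    using inj0 matrix_left_invertible_ker by blast
  let ?P = "\<lambda>x. det (B ** M x)"
  have inj: "\<forall>y. M x *v y = 0 \<longrightarrow> y = 0" if "?P x \<noteq> 0" for x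
  proof -
    have "invertible (B ** M x)"
      using that by (simp add: invertible_det_nz)
    then obtain C where "C ** (B ** M x) = mat 1"
      unfolding invertible_def by blast
    then have "(C ** B) ** M x = mat 1" by (simp add: matrix_mul_assoc)
    then show ?thesis using matrix_left_invertible_ker by metis
  qed
  have "?P x0 \<noteq> 0"
    using B by simp
  then have "?P x0 \<noteq> 0 \<and> (\<forall>x. ?P x \<noteq> 0 \<longrightarrow> (\<forall>y. M x *v y = 0 \<longrightarrow> y = 0))"
    using inj by blast
  moreover have "?P \<in> polyfun"
    by (intro polyfun_det polyfun_matrix_mult entries)
  ultimately show ?thesis by (rule bexI)
qed

definition symm_rows :: "('k \<Rightarrow> 'r::semiring_1^'a^'b) \<Rightarrow> ('k \<Rightarrow> 'r^'b) \<Rightarrow> bool" where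
  "symm_rows A y \<longleftrightarrow> (\<forall>i j. y j v* A i = y i v* A j)"

lemma symm_rows_eq_0:
  fixes F :: "'k \<Rightarrow> 'r::comm_ring_1^'a^'b" and P :: "'t \<Rightarrow> 'r^'a^'b"
    and D S :: "'r^'a^'a" and h :: "'t \<Rightarrow> nat \<Rightarrow> 'k"
  assumes cover: "\<And>z. (\<And>t. t \<in> T \<Longrightarrow> z v* P t = 0) \<Longrightarrow> z = 0"
    and comm: "\<And>u. (u v* S) v* D = (u v* D) v* S \<Longrightarrow> u = 0"
    and blocks: "\<And>t. t \<in> T \<Longrightarrow> F (h t 0) = P t \<and> F (h t 1) = P t ** D \<and> F (h t 2) = P t ** S"
    and symm: "symm_rows F y"
  shows "y i = 0"
proof -
  have sym: "y j v* F i = y i v* F j" for i j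
    using symm unfolding symm_rows_def by blast
  have head: "y (h t 0) v* P t' = 0" if t: "t \<in> T" and t': "t' \<in> T" for t t'
  proof -
    let ?u = "\<lambda>t t'. y (h t 0) v* P t'"
    have "?u t t' = ?u t' t"
      using sym[of "h t' 0" "h t 0"] blocks[OF t] blocks[OF t'] by simp
    moreover have "y (h t 1) v* P t' = ?u t' t v* D"
      using sym[of "h t 1" "h t' 0"] blocks[OF t] blocks[OF t'] by (simp add: vector_matrix_mul_assoc)
    moreover have "y (h t' 2) v* P t = ?u t t' v* S"
      using sym[of "h t' 2" "h t 0"] blocks[OF t] blocks[OF t'] by (simp add: vector_matrix_mul_assoc)
    moreover have "(y (h t 1) v* P t') v* S = (y (h t' 2) v* P t) v* D"
      using sym[of "h t' 2" "h t 1"] blocks[OF t] blocks[OF t'] by (simp add: vector_matrix_mul_assoc)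
    ultimately have "(?u t t' v* S) v* D = (?u t t' v* D) v* S" by simp
    then show ?thesis by (rule comm)
  qed
  have head_0: "y (h t 0) = 0" if "t \<in> T" for t
    using head[OF that] by (rule cover)
  have "y i v* P t = 0" if "t \<in> T" for t
    using sym[of "h t 0" i] blocks[OF that] head_0[OF that] by simp
  then show ?thesis by (rule cover)
qed

definition perm_matrix :: "('a \<Rightarrow> 'a) \<Rightarrow> 'r::semiring_1^'a^'a" where
  "perm_matrix \<sigma> = (\<chi> i j. if \<sigma> i = j then 1 else 0)"

definition diag_matrix :: "('a \<Rightarrow> 'r::semiring_1) \<Rightarrow> 'r^'a^'a" where
  "diag_matrix d = (\<chi> i j. if i = j then d i else 0)"

lemma vector_perm_matrix_apply:
  assumes "inj \<sigma>"
  shows "(v v* perm_matrix \<sigma>) $ \<sigma> i = v $ i"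
proof -
  have "(v v* perm_matrix \<sigma>) $ \<sigma> i = (\<Sum>k\<in>UNIV. if k = i then v $ k else 0)"
    unfolding vector_matrix_mult_def perm_matrix_def vec_lambda_beta
    using injD[OF assms] by (intro sum.cong) auto
  then show ?thesis by simp
qed

lemma vector_diag_matrix_apply: "(v v* diag_matrix d) $ i = v $ i * d i"
proof -
  have "(v v* diag_matrix d) $ i = (\<Sum>k\<in>UNIV. if k = i then v $ k * d k else 0)"
    unfolding vector_matrix_mult_def diag_matrix_def vec_lambda_beta by (intro sum.cong) auto
  then show ?thesis by simp
qed

lemma perm_diag_commute_eq_0:
  fixes u :: "'r::idom^'a"
  assumes \<sigma>: "inj \<sigma>" "\<And>i. \<sigma> i \<noteq> i" and d: "inj d"
    and comm: "(u v* perm_matrix \<sigma>) v* diag_matrix d = (u v* diag_matrix d) v* perm_matrix \<sigma>"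
  shows "u = 0"
proof -
  have "u $ i = 0" for i
  proof -
    have "u $ i * d (\<sigma> i) = u $ i * d i"
      using arg_cong[OF comm, of "\<lambda>v. v $ \<sigma> i"]
      by (simp add: vector_diag_matrix_apply vector_perm_matrix_apply[OF \<sigma>(1)])
    moreover have "d (\<sigma> i) \<noteq> d i"
      using \<sigma>(2) injD[OF d] by blast
    ultimately show ?thesis by simp
  qed
  then show ?thesis by (simp add: vec_eq_iff)
qed

definition block_matrix :: "('b \<Rightarrow> 't \<times> 'a) \<Rightarrow> 't \<Rightarrow> 'r::semiring_1^'a^'b" where
  "block_matrix g t = (\<chi> r s. if g r = (t, s) then 1 else 0)"

lemma block_matrix_cover:
  fixes z :: "'r::semiring_1^'b"
  assumes g: "inj g" "\<And>r. fst (g r) \<in> T"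
    and z: "\<And>t. t \<in> T \<Longrightarrow> z v* block_matrix g t = 0"
  shows "z = 0"
proof -
  have "z $ r = 0" for r
  proof -
    obtain t s where ts: "g r = (t, s)" by fastforce
    have "(z v* block_matrix g t) $ s = (\<Sum>k\<in>UNIV. if k = r then z $ k else 0)"
      unfolding vector_matrix_mult_def block_matrix_def vec_lambda_beta
      using injD[OF g(1)] ts by (intro sum.cong) auto
    then show ?thesis using z g(2)[of r] ts by simp
  qed
  then show ?thesis by (simp add: vec_eq_iff)
qed

lemma ex_fixpoint_free_inj:
  assumes "1 < CARD('a::finite)"
  shows "\<exists>\<sigma> :: 'a \<Rightarrow> 'a. inj \<sigma> \<and> (\<forall>x. \<sigma> x \<noteq> x)"
proof -
  obtain xs :: "'a list" where xs: "set xs = UNIV" "distinct xs"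
    using finite_distinct_list[of "UNIV :: 'a set"] by auto
  have len: "length xs = CARD('a)"
    using xs distinct_card by fastforce
  let ?\<sigma> = "cycle_of_list xs"
  have "?\<sigma> x \<noteq> x" for x
  proof -
    obtain n where n: "n < length xs" "x = xs ! n"
      using xs(1) in_set_conv_nth by (metis UNIV_I)
    have "map ?\<sigma> xs = rotate1 xs"
      using cyclic_rotation[OF xs(2), of 1] by simp
    then have "?\<sigma> x = rotate1 xs ! n"
      using n by (metis nth_map)
    also have "\<dots> = xs ! (Suc n mod length xs)"
      using n(1) by (rule nth_rotate1)
    finally have "?\<sigma> x = xs ! (Suc n mod length xs)" .
    moreover have "Suc n mod length xs \<noteq> n"
      using n(1) assms len by (auto simp: mod_if)
    moreover have "Suc n mod length xs < length xs"
      using n(1) by (intro mod_less_divisor) linarith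
    ultimately show ?thesis
      using n xs(2) by (simp add: nth_eq_iff_index_eq)
  qed
  moreover have "inj ?\<sigma>"
    using cycle_permutes[of xs] xs(1) permutes_inj by fastforce
  ultimately show ?thesis by blast
qed

lemma ex_inj_into_blocks:
  assumes "CARD('b::finite) \<le> p * CARD('a::finite)"
  shows "\<exists>g :: 'b \<Rightarrow> nat \<times> 'a. inj g \<and> (\<forall>r. fst (g r) < p)"
proof -
  have "card (UNIV :: 'b set) \<le> card ({..<p} \<times> (UNIV :: 'a set))"
    using assms by (simp add: card_cartesian_product)
  then obtain g :: "'b \<Rightarrow> nat \<times> 'a" where g: "g ` UNIV \<subseteq> {..<p} \<times> UNIV" "inj g"
    using card_le_inj[of "UNIV :: 'b set" "{..<p} \<times> (UNIV :: 'a set)"] by auto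
  have "fst (g r) < p" for r
    using g(1) by (auto simp: image_subset_iff mem_Times_iff)
  then show ?thesis using g(2) by blast
qed

lemma ex_symm_rows_trivial:
  assumes a: "1 < CARD('a::finite)"
    and k: "3 * ((CARD('b::finite) - 1) div CARD('a) + 1) \<le> CARD('k::finite)"
  shows "\<exists>F :: 'k \<Rightarrow> 'r::{idom,ring_char_0}^'a^'b. \<forall>y. symm_rows F y \<longrightarrow> (\<forall>i. y i = 0)"
proof -
  define p where "p = (CARD('b) - 1) div CARD('a) + 1"
  have "CARD('b) - 1 < p * CARD('a)"
    unfolding p_def using dividend_less_div_times[of "CARD('a)" "CARD('b) - 1"] by simp
  then have "CARD('b) \<le> p * CARD('a)" by linarith
  then obtain g :: "'b \<Rightarrow> nat \<times> 'a" where g: "inj g" "\<And>r. fst (g r) < p"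
    using ex_inj_into_blocks by blast
  obtain \<sigma> :: "'a \<Rightarrow> 'a" where \<sigma>: "inj \<sigma>" "\<And>x. \<sigma> x \<noteq> x"
    using ex_fixpoint_free_inj[OF a] by blast
  define d :: "'a \<Rightarrow> 'r" where "d = of_nat \<circ> to_nat"
  have d: "inj d"
    unfolding d_def by (intro inj_compose inj_of_nat inj_to_nat)
  obtain f :: "nat \<times> nat \<Rightarrow> 'k" where f: "inj_on f ({..<p} \<times> {..<3::nat})"
    using card_le_inj[of "{..<p} \<times> {..<3::nat}" "UNIV :: 'k set"] k
    by (auto simp: card_cartesian_product p_def mult.commute)
  define M :: "nat \<Rightarrow> 'r^'a^'a" where "M m = [mat 1, diag_matrix d, perm_matrix \<sigma>] ! m" for m
  define F :: "'k \<Rightarrow> 'r^'a^'b" where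
    "F i = (case inv_into ({..<p} \<times> {..<3::nat}) f i of (t, m) \<Rightarrow> block_matrix g t ** M m)" for i
  have F: "F (f (t, m)) = block_matrix g t ** M m" if "t < p" "m < 3" for t m
    using inv_into_f_f[OF f] that by (simp add: F_def)
  have "y i = 0" if "symm_rows F y" for y i
  proof (rule symm_rows_eq_0[where T = "{..<p}" and h = "\<lambda>t m. f (t, m)"])
    show "z = 0" if "\<And>t. t \<in> {..<p} \<Longrightarrow> z v* block_matrix g t = 0" for z :: "'r^'b"
      by (rule block_matrix_cover[OF g(1), where T = "{..<p}"]) (use g(2) that in auto)
    show "u = 0" if "(u v* perm_matrix \<sigma>) v* diag_matrix d = (u v* diag_matrix d) v* perm_matrix \<sigma>" for u
      using perm_diag_commute_eq_0[OF \<sigma> d that] .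
    show "F (f (t, 0)) = block_matrix g t \<and> F (f (t, 1)) = block_matrix g t ** diag_matrix d
        \<and> F (f (t, 2)) = block_matrix g t ** perm_matrix \<sigma>" if "t \<in> {..<p}" for t
      using F that by (simp add: M_def)
  qed fact
  then show ?thesis by blast
qed

definition entries :: "('k \<Rightarrow> 'r^'a^'b) \<Rightarrow> 'k \<times> 'b \<times> 'a \<Rightarrow> 'r" where
  "entries A = (\<lambda>(i, r, s). A i $ r $ s)"

definition comb_matrix :: "('k::finite \<times> 'b::finite \<times> 'a::finite \<Rightarrow> 'r) \<Rightarrow> 'r^'k^('b \<times> 'a)" where
  "comb_matrix x = (\<chi> u i. case u of (r, s) \<Rightarrow> x (i, r, s))"

definition symm_matrix ::
  "('k::finite \<times> 'b::finite \<times> 'a::finite \<Rightarrow> 'r::ring) \<Rightarrow> 'r^('k \<times> 'b)^('k \<times> 'k \<times> 'a)" where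
  "symm_matrix x = (\<chi> u w. case (u, w) of ((i, j, s), (i', r)) \<Rightarrow>
     (if i' = j then x (i, r, s) else 0) - (if i' = i then x (j, r, s) else 0))"

lemma entries_apply [simp]: "entries A (i, r, s) = A i $ r $ s"
  by (simp add: entries_def)

lemma comb_matrix_nth [simp]: "comb_matrix x $ (r, s) $ i = x (i, r, s)"
  by (simp add: comb_matrix_def)

lemma symm_matrix_nth [simp]:
  "symm_matrix x $ (i, j, s) $ (i', r) =
     (if i' = j then x (i, r, s) else 0) - (if i' = i then x (j, r, s) else 0)"
  by (simp add: symm_matrix_def)

lemma comb_matrix_polyfun: "(\<lambda>x. comb_matrix x $ u $ i) \<in> polyfun"
  by (cases u) (simp add: polyfun.var)

lemma symm_matrix_polyfun:
  "(\<lambda>x :: 'k::finite \<times> 'b::finite \<times> 'a::finite \<Rightarrow> complex. symm_matrix x $ u $ w) \<in> polyfun"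
proof -
  have ifvar: "(\<lambda>x. if b then x v else 0) \<in> polyfun" for b and v :: "'k \<times> 'b \<times> 'a"
    by (cases b) (simp_all add: polyfun.var polyfun.const)
  show ?thesis
    by (cases u, cases w) (simp, intro polyfun_diff ifvar)
qed

lemma comb_matrix_mult_eq_0_iff:
  fixes A :: "'k::finite \<Rightarrow> complex^'a::finite^'b::finite"
  shows "comb_matrix (entries A) *v c = 0 \<longleftrightarrow> (\<Sum>i\<in>UNIV. cscale (c $ i) (A i)) = 0"
proof -
  have "(comb_matrix (entries A) *v c) $ (r, s) = (\<Sum>i\<in>UNIV. cscale (c $ i) (A i)) $ r $ s" for r s
    by (simp add: matrix_vector_mult_def cscale_def sum_component mult.commute)
  then show ?thesis by (auto simp: vec_eq_iff)
qed

lemma clin_indep_mats_iff_comb_matrix: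
  fixes A :: "'k::finite \<Rightarrow> complex^'a::finite^'b::finite"
  shows "clin_indep_mats A \<longleftrightarrow> (\<forall>c. comb_matrix (entries A) *v c = 0 \<longrightarrow> c = 0)"
proof
  assume indep: "clin_indep_mats A"
  show "\<forall>c. comb_matrix (entries A) *v c = 0 \<longrightarrow> c = 0"
  proof (intro allI impI)
    fix c assume "comb_matrix (entries A) *v c = 0"
    then have "(\<Sum>i\<in>UNIV. cscale (c $ i) (A i)) = 0"
      by (simp add: comb_matrix_mult_eq_0_iff)
    then have "c $ i = 0" for i
      using indep unfolding clin_indep_mats_def by blast
    then show "c = 0"
      by (simp add: vec_eq_iff)
  qed
next
  assume inj: "\<forall>c. comb_matrix (entries A) *v c = 0 \<longrightarrow> c = 0"
  show "clin_indep_mats A"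
    unfolding clin_indep_mats_def
  proof (intro allI impI)
    fix c :: "'k \<Rightarrow> complex" and i
    assume "(\<Sum>i\<in>UNIV. cscale (c i) (A i)) = 0"
    then have "(\<chi> i. c i) = 0"
      using inj by (simp add: comb_matrix_mult_eq_0_iff)
    then show "c i = 0"
      by (metis vec_lambda_beta zero_index)
  qed
qed

lemma symm_matrix_mult_eq_0_iff:
  fixes A :: "'k::finite \<Rightarrow> 'r::comm_ring_1^'a::finite^'b::finite"
  shows "symm_matrix (entries A) *v Y = 0 \<longleftrightarrow> symm_rows A (\<lambda>i. \<chi> r. Y $ (i, r))"
proof -
  have "(symm_matrix (entries A) *v Y) $ (i, j, s) =
      ((\<chi> r. Y $ (j, r)) v* A i) $ s - ((\<chi> r. Y $ (i, r)) v* A j) $ s" for i j s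
  proof -
    have "(symm_matrix (entries A) *v Y) $ (i, j, s) =
        (\<Sum>i'\<in>UNIV. \<Sum>r\<in>UNIV. symm_matrix (entries A) $ (i, j, s) $ (i', r) * Y $ (i', r))"
      by (simp add: matrix_vector_mult_def sum.cartesian_product del: symm_matrix_nth)
    also have "\<dots> = (\<Sum>r\<in>UNIV. \<Sum>i'\<in>UNIV.
        (if i' = j then Y $ (j, r) * A i $ r $ s else 0) - (if i' = i then Y $ (i, r) * A j $ r $ s else 0))"
      by (subst sum.swap, intro sum.cong refl) (auto simp: algebra_simps)
    also have "\<dots> = (\<Sum>r\<in>UNIV. Y $ (j, r) * A i $ r $ s) - (\<Sum>r\<in>UNIV. Y $ (i, r) * A j $ r $ s)"
      by (simp add: sum_subtractf)
    finally show ?thesis by (simp add: vector_matrix_mult_def)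
  qed
  then show ?thesis
    by (auto simp: symm_rows_def vec_eq_iff)
qed

lemma symm_rows_trivial_iff_symm_matrix:
  fixes A :: "'k::finite \<Rightarrow> 'r::comm_ring_1^'a::finite^'b::finite"
  shows "(\<forall>y. symm_rows A y \<longrightarrow> (\<forall>i. y i = 0)) \<longleftrightarrow> (\<forall>Y. symm_matrix (entries A) *v Y = 0 \<longrightarrow> Y = 0)"
proof safe
  fix Y assume trivial: "\<forall>y. symm_rows A y \<longrightarrow> (\<forall>i. y i = 0)" and "symm_matrix (entries A) *v Y = 0"
  then have "symm_rows A (\<lambda>i. \<chi> r. Y $ (i, r))"
    by (simp add: symm_matrix_mult_eq_0_iff)
  then have "(\<chi> r. Y $ (i, r)) = 0" for i
    using trivial by blast
  then have "Y $ (i, r) = 0" for i r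
    by (metis vec_lambda_beta zero_index)
  then show "Y = 0"
    by (simp add: vec_eq_iff)
next
  fix y i assume inj: "\<forall>Y. symm_matrix (entries A) *v Y = 0 \<longrightarrow> Y = 0" and "symm_rows A y"
  then have "symm_matrix (entries A) *v (\<chi> w. y (fst w) $ snd w) = 0"
    by (simp add: symm_matrix_mult_eq_0_iff)
  then have "(\<chi> w. y (fst w) $ snd w) = 0"
    using inj by blast
  then have "(\<chi> w. y (fst w) $ snd w) $ (i, r) = 0" for r
    by simp
  then show "y i = 0"
    by (simp add: vec_eq_iff)
qed

lemma clin_indep_mats_locus:
  fixes B :: "'k::finite \<Rightarrow> complex^'a::finite^'b::finite"
  assumes "clin_indep_mats B"
  shows "\<exists>P\<in>polyfun. P (entries B) \<noteq> 0 \<and> (\<forall>A. P (entries A) \<noteq> 0 \<longrightarrow> clin_indep_mats A)"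
  using polyfun_injective_locus[OF comb_matrix_polyfun, of "entries B"] assms
  unfolding clin_indep_mats_iff_comb_matrix by blast

lemma symm_rows_trivial_locus:
  fixes B :: "'k::finite \<Rightarrow> complex^'a::finite^'b::finite"
  assumes "\<forall>y. symm_rows B y \<longrightarrow> (\<forall>i. y i = 0)"
  shows "\<exists>P\<in>polyfun. P (entries B) \<noteq> 0 \<and>
    (\<forall>A. P (entries A) \<noteq> 0 \<longrightarrow> (\<forall>y. symm_rows A y \<longrightarrow> (\<forall>i. y i = 0)))"
  using polyfun_injective_locus[OF symm_matrix_polyfun, of "entries B"] assms
  unfolding symm_rows_trivial_iff_symm_matrix by blast

lemma cscale_0_left [simp]: "cscale 0 M = 0"
  by (simp add: cscale_def vec_eq_iff)

lemma cscale_0_right [simp]: "cscale c 0 = 0"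
  by (simp add: cscale_def vec_eq_iff)

lemma cscale_1 [simp]: "cscale 1 M = M"
  by (simp add: cscale_def vec_eq_iff)

lemma sum_cscale_in_cspan_mats: "(\<Sum>i\<in>F. cscale (c i) (A i)) \<in> cspan_mats A"
proof -
  have "(\<Sum>i\<in>F. cscale (c i) (A i)) = (\<Sum>i\<in>UNIV. if i \<in> F then cscale (c i) (A i) else 0)"
    by (simp add: sum.If_cases)
  also have "\<dots> = (\<Sum>i\<in>UNIV. cscale (if i \<in> F then c i else 0) (A i))"
    by (intro sum.cong) auto
  finally show ?thesis
    unfolding cspan_mats_def by auto
qed

lemma clinear_on_cspan_mats_eq_0:
  assumes q: "clinear_on_mats (cspan_mats A) q" and qA: "\<And>i. q (A i) = 0"
  shows "q x = 0"
proof (cases "x \<in> cspan_mats A")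
  case True
  then obtain c where x: "x = (\<Sum>i\<in>UNIV. cscale (c i) (A i))"
    unfolding cspan_mats_def by blast
  have add: "q (u + v) = q u + q v" and scale: "q (cscale a u) = cscale a (q u)"
    if "u \<in> cspan_mats A" "v \<in> cspan_mats A" for u v a
    using q that unfolding clinear_on_mats_def by blast+
  have "q (\<Sum>i\<in>F. cscale (c i) (A i)) = 0" for F
    using finite[of F]
  proof (induction F rule: finite_induct)
    case empty
    have "0 \<in> cspan_mats A"
      using sum_cscale_in_cspan_mats[where F = "{}"] by simp
    then show ?case
      using add[of 0 0] by simp
  next
    case (insert i F)
    have "A i \<in> cspan_mats A"
      using sum_cscale_in_cspan_mats[where F = "{i}" and c = "\<lambda>_. 1"] by simp
    moreover have "cscale (c i) (A i) \<in> cspan_mats A"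
      using sum_cscale_in_cspan_mats[where F = "{i}"] by simp
    ultimately show ?case
      using insert add[OF _ sum_cscale_in_cspan_mats] scale qA by simp
  qed
  then show ?thesis
    using x by simp
next
  case False
  then show ?thesis
    using q unfolding clinear_on_mats_def by blast
qed

lemma matrix_mult_row: "(B ** C) $ g = B $ g v* C"
  by (simp add: matrix_matrix_mult_def vector_matrix_mult_def vec_eq_iff)

lemma Symm_phi_eq_0:
  fixes A :: "'k::finite \<Rightarrow> complex^'a::finite^'b::finite"
  assumes trivial: "\<forall>y. symm_rows A y \<longrightarrow> (\<forall>i. y i = 0)"
  shows "Symm_phi (cspan_mats A) = {\<lambda>_. 0 :: complex^'b^'c::finite}"
proof -
  have "q = (\<lambda>_. 0)" if q: "q \<in> Symm_phi (cspan_mats A)" for q :: "complex^'a^'b \<Rightarrow> complex^'b^'c"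
  proof -
    have span: "A i \<in> cspan_mats A" for i
      using sum_cscale_in_cspan_mats[where F = "{i}" and c = "\<lambda>_. 1"] by simp
    have "q (A i) $ g = 0" for i g
    proof -
      have "q (A j) ** A i = q (A i) ** A j" for i j
        using q span unfolding Symm_phi_def by blast
      then have "symm_rows A (\<lambda>i. q (A i) $ g)"
        unfolding symm_rows_def by (metis matrix_mult_row)
      then show ?thesis
        using trivial by blast
    qed
    then have "q (A i) = 0" for i
      by (simp add: vec_eq_iff)
    then show ?thesis
      using q clinear_on_cspan_mats_eq_0 unfolding Symm_phi_def by blast
  qed
  moreover have "(\<lambda>_. 0) \<in> Symm_phi (cspan_mats A)"
    by (simp add: Symm_phi_def clinear_on_mats_def)
  ultimately show ?thesis by blast
qed

lemma ex_clin_indep_mats: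
  assumes "CARD('k::finite) \<le> CARD('a::finite) * CARD('b::finite)"
  shows "\<exists>A :: 'k \<Rightarrow> complex^'a^'b. clin_indep_mats A"
proof -
  have "card (UNIV :: 'k set) \<le> card (UNIV :: ('b \<times> 'a) set)"
    using assms by (simp add: card_cartesian_product mult.commute flip: UNIV_Times_UNIV)
  then obtain f :: "'k \<Rightarrow> 'b \<times> 'a" where f: "inj f"
    using card_le_inj[of "UNIV :: 'k set" "UNIV :: ('b \<times> 'a) set"] by auto
  define A :: "'k \<Rightarrow> complex^'a^'b" where "A i = (\<chi> r s. if f i = (r, s) then 1 else 0)" for i
  have "c i = 0" if "(\<Sum>j\<in>UNIV. cscale (c j) (A j)) = 0" for c i
  proof -
    obtain r s where rs: "f i = (r, s)" by fastforce
    have "(\<Sum>j\<in>UNIV. cscale (c j) (A j)) $ r $ s = (\<Sum>j\<in>UNIV. if j = i then c j else 0)"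
      unfolding sum_component cscale_def A_def vec_lambda_beta
      using rs injD[OF f] by (intro sum.cong) auto
    then show ?thesis
      using that by simp
  qed
  then show ?thesis
    unfolding clin_indep_mats_def by blast
qed

theorem mainTheorem4:
  assumes "CARD('a::finite) > 1"
    and "3 * ((CARD('b::finite) - 1) div CARD('a) + 1) \<le> CARD('k::finite)"
    and "CARD('k) \<le> CARD('a) * CARD('b)"
  shows "\<exists>P \<in> polyfun. (\<exists>x. P x \<noteq> 0) \<and>
           (\<forall>A :: 'k \<Rightarrow> complex^'a^'b.
              P (\<lambda>(i, r, s). A i $ r $ s) \<noteq> 0 \<longrightarrow>
                clin_indep_mats A \<and>
                Symm_phi (cspan_mats A) = {(\<lambda>_. 0 :: complex^'b^'c::finite)})"
proof -
  obtain B :: "'k \<Rightarrow> complex^'a^'b" where "\<forall>y. symm_rows B y \<longrightarrow> (\<forall>i. y i = 0)"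
    using ex_symm_rows_trivial[OF assms(1,2)] by blast
  then obtain PS where PS: "PS \<in> polyfun" "PS (entries B) \<noteq> 0"
    "\<And>A. PS (entries A) \<noteq> 0 \<Longrightarrow> \<forall>y. symm_rows A y \<longrightarrow> (\<forall>i. y i = 0)"
    using symm_rows_trivial_locus by blast
  obtain A :: "'k \<Rightarrow> complex^'a^'b" where "clin_indep_mats A"
    using ex_clin_indep_mats[OF assms(3)] by blast
  then obtain PI where PI: "PI \<in> polyfun" "PI (entries A) \<noteq> 0"
    "\<And>A. PI (entries A) \<noteq> 0 \<Longrightarrow> clin_indep_mats A"
    using clin_indep_mats_locus by blast
  have "(\<lambda>x. PI x * PS x) \<in> polyfun"
    using PI(1) PS(1) by (rule polyfun.mult)
  moreover have "\<exists>x. PI x * PS x \<noteq> 0"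
    using polyfun_common_nonzero[where P = PI and Q = PS, OF PI(1) PS(1) PI(2) PS(2)] by auto
  moreover have "clin_indep_mats A \<and> Symm_phi (cspan_mats A) = {\<lambda>_. 0 :: complex^'b^'c}"
    if "PI (entries A) * PS (entries A) \<noteq> 0" for A :: "'k \<Rightarrow> complex^'a^'b"
    using that PI(3)[of A] PS(3)[of A] Symm_phi_eq_0[of A] by auto
  ultimately show ?thesis
    unfolding entries_def[symmetric] by (intro bexI[of _ "\<lambda>x. PI x * PS x"]) auto
qed

end
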